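(* Let $p$ be a binary word of length $l$ with exactly $3$ runs whose second run has size at least $2$. For every $n\ge l$, every $p$-optimal binary word of length $n$ has exactly $3$ runs.
   Context: $c_p(w)$ is the number of occurrences of $p$ as a (not necessarily consecutive) subsequence of $w$. $M_{n,p}=\max\{c_p(w): w\in\{0,1\}^n\}$; a binary word $w$ of length $n$ is $p$-optimal if $c_p(w)=M_{n,p}$. A run is a maximal block of consecutive equal letters; its size is its length. *)

theory Defs
  imports Main
begin

definition occ :: "bool list \<Rightarrow> bool list \<Rightarrow> nat" where
  "occ p w = card {I. I \<subseteq> {0..<length w} \<and> card I = length p \<and> nths w I = p}"

definition maxocc :: "nat \<Rightarrow> bool list \<Rightarrow> nat" where
  "maxocc n p = Max ((\<lambda>w. occ p w) ` {w. length w = n})"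

definition optimal :: "bool list \<Rightarrow> bool list \<Rightarrow> bool" where
  "optimal p w \<longleftrightarrow> occ p w = maxocc (length w) p"

fun runs :: "'a list \<Rightarrow> 'a list list" where
  "runs [] = []"
| "runs (x # xs) = (case runs xs of
      [] \<Rightarrow> [[x]]
    | r # rs \<Rightarrow> (if hd r = x then (x # r) # rs else [x] # r # rs))"

end

theory Submission
  imports Defs
begin

text \<open>
  Write p = a^i b^j a^k with j \<ge> 2, and let w contain m letters a and r letters b.
  Group the occurrences of p in w by the positions s < t of their first and last b: such a
  pair contributes C(A,i) C(B,j-2) C(E,k), where A and E count the a's before s and after t,
  and B the b's in between. As A + E \<le> m, this is at most C(B,j-2) M with
  M = max_t C(t,i) C(m-t,k), hence c_p(w) \<le> C(r,j) M, and a^t b^r a^(m-t) attains this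
  bound for a maximising t. So an optimal w attains it too, and c_p(w) > 0 because n \<ge> |p|.
  Equality at the pair formed by the first and the last b of w forces A \<ge> i, E \<ge> k and
  A + E = m: no a lies between the b's, and w = a^A b^r a^E has three runs.
\<close>

section \<open>Counting subsequence occurrences\<close>

fun subseq_count :: "'a list \<Rightarrow> 'a list \<Rightarrow> nat" where
  "subseq_count [] w = 1"
| "subseq_count (x # p) [] = 0"
| "subseq_count (x # p) (y # w) = subseq_count (x # p) w + (if x = y then subseq_count p w else 0)"

definition occurrence_sets :: "'a list \<Rightarrow> 'a list \<Rightarrow> nat set set" where
  "occurrence_sets p w = {I. I \<subseteq> {0..<length w} \<and> card I = length p \<and> nths w I = p}"

lemma finite_occurrence_sets: "finite (occurrence_sets p w)"
  by (rule finite_subset[of _ "Pow {0..<length w}"]) (auto simp: occurrence_sets_def)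

lemma occurrence_sets_Nil: "occurrence_sets [] w = {{}}"
proof (rule set_eqI)
  fix I :: "nat set"
  have "I \<subseteq> {0..<length w} \<Longrightarrow> card I = 0 \<Longrightarrow> I = {}"
    by (meson card_0_eq finite_atLeastLessThan finite_subset)
  then show "I \<in> occurrence_sets [] w \<longleftrightarrow> I \<in> {{}}"
    unfolding occurrence_sets_def by auto
qed

lemma occurrence_sets_Cons_Nil: "occurrence_sets (x # p) [] = {}"
  by (auto simp: occurrence_sets_def)

lemma set_nat_Suc_cases:
  obtains J where "I = Suc ` J" | J where "I = insert 0 (Suc ` J)"
proof -
  define J where "J = {j. Suc j \<in> I}"
  have "I = (if 0 \<in> I then insert 0 (Suc ` J) else Suc ` J)"
    unfolding J_def by (auto simp: image_iff) (metis not0_implies_Suc)+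
  then show thesis using that by (auto split: if_splits)
qed

lemma Suc_image_in_occurrence_sets:
  "Suc ` J \<in> occurrence_sets p (y # w) \<longleftrightarrow> J \<in> occurrence_sets p w"
proof -
  have "{j. Suc j \<in> Suc ` J} = J" by auto
  then show ?thesis
    by (auto simp: occurrence_sets_def nths_Cons card_image finite_subset
             dest: finite_imageD)
qed

lemma insert_Suc_image_in_occurrence_sets:
  "insert 0 (Suc ` J) \<in> occurrence_sets (x # p) (y # w) \<longleftrightarrow>
     x = y \<and> J \<in> occurrence_sets p w"
proof -
  have "{j. Suc j \<in> insert 0 (Suc ` J)} = J" by auto
  then show ?thesis
    by (auto simp: occurrence_sets_def nths_Cons card_image finite_subset
             dest: finite_imageD)
qed

lemma occurrence_sets_Cons_Cons:
  "occurrence_sets (x # p) (y # w) = (\<lambda>J. Suc ` J) ` occurrence_sets (x # p) w \<union>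
     (if x = y then (\<lambda>J. insert 0 (Suc ` J)) ` occurrence_sets p w else {})"
  (is "?L = ?R")
proof (intro set_eqI iffI)
  fix I assume "I \<in> ?L"
  then show "I \<in> ?R"
    by (cases I rule: set_nat_Suc_cases)
       (auto simp: Suc_image_in_occurrence_sets insert_Suc_image_in_occurrence_sets)
next
  fix I assume "I \<in> ?R"
  then show "I \<in> ?L"
    by (auto simp: Suc_image_in_occurrence_sets insert_Suc_image_in_occurrence_sets split: if_splits)
qed

lemma card_occurrence_sets: "card (occurrence_sets p w) = subseq_count p w"
proof (induction p w rule: subseq_count.induct)
  case (1 w)
  then show ?case by (simp add: occurrence_sets_Nil)
next
  case (2 x p)
  then show ?case by (simp add: occurrence_sets_Cons_Nil)
next
  case (3 x p y w)
  have "inj_on (\<lambda>J. Suc ` J) X" "inj_on (\<lambda>J. insert 0 (Suc ` J)) X"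
    for X :: "nat set set"
    by (auto simp: inj_on_def inj_image_eq_iff)
  moreover have "(\<lambda>J. Suc ` J) ` X \<inter> (\<lambda>J. insert 0 (Suc ` J)) ` Y = {}"
    for X Y :: "nat set set"
    by auto
  ultimately show ?case
    using 3 by (simp add: occurrence_sets_Cons_Cons card_Un_disjoint finite_occurrence_sets card_image)
qed

lemma occ_eq_subseq_count: "occ p w = subseq_count p w"
  using card_occurrence_sets unfolding occ_def occurrence_sets_def .

lemma subseq_count_replicate: "subseq_count (replicate k x) w = count_list w x choose k"
proof (induction w arbitrary: k)
  case Nil
  then show ?case by (cases k) auto
next
  case (Cons y w)
  show ?case
  proof (cases k)
    case (Suc k')
    then show ?thesis using Cons.IH[of k] Cons.IH[of k'] by auto
  qed simp
qed

lemma subseq_count_append_right_mono: "subseq_count p v \<le> subseq_count p (u @ v)"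
proof (induction u)
  case (Cons y u)
  then show ?case by (cases p) auto
qed simp

lemma subseq_count_append_supermult:
  "subseq_count p u * subseq_count q v \<le> subseq_count (p @ q) (u @ v)"
proof (induction u arbitrary: p)
  case Nil
  then show ?case by (cases p) (auto simp: subseq_count_append_right_mono)
next
  case (Cons y u)
  show ?case
  proof (cases p)
    case Nil
    then show ?thesis using subseq_count_append_right_mono[of q v "y # u"] by simp
  next
    case (Cons z p')
    then show ?thesis using Cons.IH[of p] Cons.IH[of p'] by (auto simp: algebra_simps)
  qed
qed

lemma subseq_count_self_pos: "0 < subseq_count p p"
  by (induction p) auto

section \<open>Splitting a pattern at a letter\<close>

lemma subseq_count_split:
  "subseq_count (u @ x # v) w =
     (\<Sum>s<length w. if w ! s = x
        then subseq_count u (take s w) * subseq_count v (drop (Suc s) w) else 0)"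
proof (induction w arbitrary: u)
  case Nil
  then show ?case by (cases u) auto
next
  case (Cons y w)
  have shift: "(\<Sum>s<length (y # w). f s) = f 0 + (\<Sum>s<length w. f (Suc s))"
    for f :: "nat \<Rightarrow> nat"
    by (simp add: sum.lessThan_Suc_shift del: sum.lessThan_Suc)
  show ?case
  proof (cases u)
    case Nil
    then show ?thesis
      unfolding shift using Cons.IH[of "[]"] by (simp del: sum.lessThan_Suc cong: if_cong)
  next
    case (Cons z u')
    have if_add: "(if c then a + b else 0) = (if c then a else 0) + (if c then b else (0::nat))"
      for c a b
      by simp
    from Cons show ?thesis
      unfolding shift using Cons.IH[of u] Cons.IH[of u']
      by (simp add: if_add sum.distrib algebra_simps del: sum.lessThan_Suc cong: if_cong)
  qed
qed

lemma subseq_count_Nil_right: "p \<noteq> [] \<Longrightarrow> subseq_count p [] = 0"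
  by (cases p) auto

lemma subseq_count_split_drop:
  "subseq_count (u @ x # v) (drop k w) =
     (\<Sum>t<length w. if k \<le> t \<and> w ! t = x
        then subseq_count u (drop k (take t w)) * subseq_count v (drop (Suc t) w) else 0)"
proof (induction k arbitrary: w)
  case 0
  show ?case unfolding drop_0 subseq_count_split by simp
next
  case (Suc k)
  show ?case
  proof (cases w)
    case Nil
    then show ?thesis by (simp add: subseq_count_Nil_right)
  next
    case (Cons y w')
    show ?thesis
      unfolding Cons using Suc.IH[of w']
      by (simp add: sum.lessThan_Suc_shift del: sum.lessThan_Suc cong: if_cong)
  qed
qed

lemma subseq_count_split_twice:
  "subseq_count (u @ x # v @ x # u') w =
     (\<Sum>s<length w. \<Sum>t<length w. if s < t \<and> w ! s = x \<and> w ! t = x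
        then subseq_count u (take s w) * subseq_count v (drop (Suc s) (take t w))
             * subseq_count u' (drop (Suc t) w)
        else 0)"
  unfolding subseq_count_split[of u x "v @ x # u'"] subseq_count_split_drop
  by (intro sum.cong refl) (auto simp: sum_distrib_left Suc_le_eq mult.assoc intro!: sum.cong)

section \<open>Letter counts and runs\<close>

lemma count_list_replicate: "count_list (replicate n x) y = (if x = y then n else 0)"
  by (induction n) auto

lemma count_list_bool: "count_list w a + count_list w (\<not> a) = length w"
  by (induction w) auto

lemma count_list_drop_le: "count_list (drop n w) x \<le> count_list w x"
  by (metis append_take_drop_id count_list_append le_add2)

lemma concat_runs: "concat (runs l) = l"
  by (induction l) (auto split: list.splits)

lemma runs_replicate_hd:
  "r \<in> set (runs l) \<Longrightarrow> r \<noteq> [] \<and> r = replicate (length r) (hd r)"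
proof (induction l arbitrary: r)
  case (Cons x xs)
  then show ?case
    by (cases "runs xs") (auto split: if_splits simp: replicate_length_same)
qed simp

lemma runs_successively_hd: "successively (\<lambda>r s. hd r \<noteq> hd s) (runs l)"
proof (induction l)
  case (Cons x xs)
  then show ?case
    by (cases "runs xs") (auto simp: successively_Cons)
qed simp

lemma runs_ConsE:
  obtains r rs where "runs (x # xs) = (x # r) # rs"
  using that by (cases "runs xs"; cases "hd (hd (runs xs)) = x") auto

lemma runs_replicate_append:
  assumes "rest = [] \<or> hd rest \<noteq> c"
  shows "runs (replicate (Suc n) c @ rest) = replicate (Suc n) c # runs rest"
proof (induction n)
  case 0
  show ?case
  proof (cases rest)
    case (Cons y ys)
    moreover obtain r rs where "runs (y # ys) = (y # r) # rs"
      using runs_ConsE .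
    ultimately show ?thesis using assms by simp
  qed simp
qed simp

lemma runs_three_blocks:
  assumes "a \<noteq> b"
  shows "runs (replicate (Suc x) a @ replicate (Suc y) b @ replicate (Suc z) a) =
           [replicate (Suc x) a, replicate (Suc y) b, replicate (Suc z) a]"
  using assms runs_replicate_append[of "[]" a z] runs_replicate_append[of _ b y]
    runs_replicate_append[of _ a x]
  by (simp del: replicate_Suc)

lemma three_runs_blocks:
  fixes p :: "bool list"
  assumes runs: "runs p = [r0, r1, r2]"
  obtains a
  where "p = replicate (length r0) a @ replicate (length r1) (\<not> a) @ replicate (length r2) a"
    and "r0 \<noteq> []" "r2 \<noteq> []"
proof -
  have r0: "r0 \<noteq> []" "r0 = replicate (length r0) (hd r0)"
    and r1: "r1 = replicate (length r1) (hd r1)"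
    and r2: "r2 \<noteq> []" "r2 = replicate (length r2) (hd r2)"
    using runs_replicate_hd[of _ p] runs by auto
  have "hd r0 \<noteq> hd r1" "hd r1 \<noteq> hd r2"
    using runs_successively_hd[of p] runs by auto
  then have "hd r1 = (\<not> hd r0)" "hd r2 = hd r0"
    by auto
  moreover have "p = r0 @ r1 @ r2"
    using concat_runs[of p] runs by simp
  then have "p = replicate (length r0) (hd r0) @ replicate (length r1) (hd r1)
      @ replicate (length r2) (hd r2)"
    by (subst (asm) r0(2), subst (asm) r1, subst (asm) r2(2))
  ultimately have "p = replicate (length r0) (hd r0) @ replicate (length r1) (\<not> hd r0)
      @ replicate (length r2) (hd r0)"
    by simp
  then show thesis
    using that r0 r2 by blast
qed

section \<open>Patterns with three blocks\<close>

lemma binomial_strict_mono_upper: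
  assumes "0 < k" "k \<le> x" "x < y"
  shows "x choose k < y choose k"
proof -
  obtain k' where k': "k = Suc k'" using assms(1) by (cases k) auto
  have "x choose k < Suc x choose k" using assms(2) k' by simp
  also have "\<dots> \<le> y choose k" using assms(3) by (intro binomial_right_mono) simp
  finally show ?thesis .
qed

definition binomial_product_max :: "nat \<Rightarrow> nat \<Rightarrow> nat \<Rightarrow> nat" where
  "binomial_product_max i k m = Max ((\<lambda>t. (t choose i) * ((m - t) choose k)) ` {..m})"

lemma binomial_product_le_max:
  "t \<le> m \<Longrightarrow> (t choose i) * ((m - t) choose k) \<le> binomial_product_max i k m"
  unfolding binomial_product_max_def by (rule Max_ge) auto

lemma binomial_product_max_attained:
  obtains t where "t \<le> m" "(t choose i) * ((m - t) choose k) = binomial_product_max i k m"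
proof -
  have "binomial_product_max i k m \<in> (\<lambda>t. (t choose i) * ((m - t) choose k)) ` {..m}"
    unfolding binomial_product_max_def by (rule Max_in) auto
  then show thesis using that by auto
qed

lemma binomial_outer_le_max:
  assumes "s < t"
  shows "(count_list (take s w) a choose i) * (count_list (drop (Suc t) w) a choose k)
           \<le> binomial_product_max i k (count_list w a)"
proof -
  define A where "A = count_list (take s w) a"
  have "drop (Suc t) w = drop (Suc t - s) (drop s w)"
    using assms by simp
  then have "A + count_list (drop (Suc t) w) a \<le> count_list w a"
    using count_list_drop_le[of "Suc t - s" "drop s w" a] count_list_append[of "take s w" "drop s w" a]
    unfolding A_def by simp
  then have "count_list (drop (Suc t) w) a choose k \<le> (count_list w a - A) choose k"
    by (intro binomial_right_mono) simp
  then have "(A choose i) * (count_list (drop (Suc t) w) a choose k)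
      \<le> (A choose i) * ((count_list w a - A) choose k)"
    by simp
  also have "\<dots> \<le> binomial_product_max i k (count_list w a)"
    using \<open>A + _ \<le> _\<close> by (intro binomial_product_le_max) simp
  finally show ?thesis unfolding A_def .
qed

lemma subseq_count_blocks_ge:
  assumes "a \<noteq> b"
  shows "(t choose i) * (r choose j) * (s choose k)
           \<le> subseq_count (replicate i a @ replicate j b @ replicate k a)
                (replicate t a @ replicate r b @ replicate s a)"
proof -
  have "subseq_count (replicate i a) (replicate t a)
          * (subseq_count (replicate j b) (replicate r b) * subseq_count (replicate k a) (replicate s a))
        \<le> subseq_count (replicate i a) (replicate t a)
          * subseq_count (replicate j b @ replicate k a) (replicate r b @ replicate s a)"
    by (intro mult_le_mono2 subseq_count_append_supermult)
  also have "\<dots> \<le> subseq_count (replicate i a @ replicate j b @ replicate k a)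
                (replicate t a @ replicate r b @ replicate s a)"
    by (rule subseq_count_append_supermult)
  finally show ?thesis
    by (simp add: subseq_count_replicate count_list_replicate mult.assoc)
qed

lemma replicate_Suc_Suc: "replicate (Suc (Suc j)) x = x # replicate j x @ [x]"
  by (simp add: replicate_append_same)

lemma subseq_count_blocks_pair_sum:
  "subseq_count (replicate i a @ replicate (Suc (Suc j)) b @ replicate k a) w =
     (\<Sum>s<length w. \<Sum>t<length w. if s < t \<and> w ! s = b \<and> w ! t = b
        then (count_list (take s w) a choose i) * (count_list (drop (Suc s) (take t w)) b choose j)
             * (count_list (drop (Suc t) w) a choose k)
        else 0)"
  unfolding replicate_Suc_Suc append_assoc append_Cons append_Nil
  unfolding subseq_count_split_twice subseq_count_replicate ..

lemma binomial_pair_sum: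
  "count_list w b choose Suc (Suc j) =
     (\<Sum>s<length w. \<Sum>t<length w. if s < t \<and> w ! s = b \<and> w ! t = b
        then count_list (drop (Suc s) (take t w)) b choose j else 0)"
  using subseq_count_split_twice[of "[]" b "replicate j b" "[]" w]
  unfolding replicate_Suc_Suc subseq_count_replicate[symmetric]
  by (simp add: subseq_count_replicate cong: if_cong)

lemma subseq_count_blocks_le:
  "subseq_count (replicate i a @ replicate (Suc (Suc j)) b @ replicate k a) w
     \<le> (count_list w b choose Suc (Suc j)) * binomial_product_max i k (count_list w a)"
  unfolding subseq_count_blocks_pair_sum binomial_pair_sum sum_distrib_right
  using binomial_outer_le_max[of _ _ w a i k]
  by (intro sum_mono) (auto simp: mult.commute mult.left_commute)

lemma subseq_count_blocks_eq_outer: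
  assumes eq: "subseq_count (replicate i a @ replicate (Suc (Suc j)) b @ replicate k a) w
      = (count_list w b choose Suc (Suc j)) * binomial_product_max i k (count_list w a)"
    and w: "w = ys @ b # ms @ b # es"
    and pos: "0 < count_list ms b choose j"
  shows "(count_list ys a choose i) * (count_list es a choose k)
           = binomial_product_max i k (count_list w a)"
proof -
  define M where "M = binomial_product_max i k (count_list w a)"
  define between where "between s t = count_list (drop (Suc s) (take t w)) b choose j" for s t
  define T where "T = (\<lambda>(s, t). if s < t \<and> w ! s = b \<and> w ! t = b
      then (count_list (take s w) a choose i) * between s t * (count_list (drop (Suc t) w) a choose k)
      else 0)"
  define U where
    "U = (\<lambda>(s, t). (if s < t \<and> w ! s = b \<and> w ! t = b then between s t else 0) * M)"
  let ?P = "{..<length w} \<times> {..<length w}"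
  have "sum T ?P = subseq_count (replicate i a @ replicate (Suc (Suc j)) b @ replicate k a) w"
    unfolding subseq_count_blocks_pair_sum T_def between_def by (simp add: sum.cartesian_product)
  moreover have "sum U ?P = (count_list w b choose Suc (Suc j)) * M"
    unfolding binomial_pair_sum U_def between_def sum_distrib_right by (simp add: sum.cartesian_product)
  ultimately have "sum T ?P = sum U ?P"
    using eq unfolding M_def by simp
  moreover have "T st \<le> U st" for st
    using binomial_outer_le_max[of "fst st" "snd st" w a i k]
    unfolding T_def U_def M_def by (auto simp: case_prod_beta mult.commute mult.left_commute)
  moreover have "(length ys, length ys + Suc (length ms)) \<in> ?P"
    using w by simp
  ultimately have
    "T (length ys, length ys + Suc (length ms)) = U (length ys, length ys + Suc (length ms))"
    by (intro sum_mono_inv[of T ?P U]) auto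
  then show ?thesis
    using pos unfolding T_def U_def between_def M_def w by (simp add: nth_append)
qed

lemma bool_list_eq_replicate: "(\<not> b) \<notin> set xs \<Longrightarrow> xs = replicate (length xs) b"
  by (induction xs) auto

lemma extremal_blocks_word:
  fixes w :: "bool list" and a :: bool
  defines "b \<equiv> \<not> a"
  assumes ik: "0 < i" "0 < k"
    and eq: "subseq_count (replicate i a @ replicate (Suc (Suc j)) b @ replicate k a) w
      = (count_list w b choose Suc (Suc j)) * binomial_product_max i k (count_list w a)"
    and pos: "0 < subseq_count (replicate i a @ replicate (Suc (Suc j)) b @ replicate k a) w"
  obtains x y z where "w = replicate (Suc x) a @ replicate (Suc y) b @ replicate (Suc z) a"
proof -
  define M where "M = binomial_product_max i k (count_list w a)"
  have "Suc (Suc j) \<le> count_list w b" "0 < M"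
    using eq pos unfolding M_def by auto
  then have "b \<in> set w"
    by (cases "b \<in> set w") auto
  then obtain ys zs where ys: "w = ys @ b # zs" "b \<notin> set ys"
    using split_list_first by metis
  with \<open>Suc (Suc j) \<le> count_list w b\<close> have "b \<in> set zs"
    by (cases "b \<in> set zs") auto
  then obtain ms es where zs: "zs = ms @ b # es" "b \<notin> set es"
    using split_list_last by metis
  have w: "w = ys @ b # ms @ b # es"
    using ys zs by simp
  have "j \<le> count_list ms b"
    using \<open>Suc (Suc j) \<le> count_list w b\<close> ys(2) zs(2) unfolding w by simp
  then have outer: "(count_list ys a choose i) * (count_list es a choose k) = M"
    using subseq_count_blocks_eq_outer[OF eq w] unfolding M_def by simp
  then have A: "i \<le> count_list ys a" and E: "k \<le> count_list es a"
    using \<open>0 < M\<close> by (auto simp: zero_less_mult_iff simp flip: zero_less_binomial_iff)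
  have "a \<notin> set ms"
  proof
    assume "a \<in> set ms"
    then have "count_list es a < count_list w a - count_list ys a"
      unfolding w b_def by (cases "count_list ms a") (auto simp: count_list_0_iff)
    then have "(count_list ys a choose i) * (count_list es a choose k)
        < (count_list ys a choose i) * ((count_list w a - count_list ys a) choose k)"
      using A E ik by (simp add: binomial_strict_mono_upper)
    also have "\<dots> \<le> M"
      unfolding M_def by (rule binomial_product_le_max) (simp add: w)
    finally show False using outer by simp
  qed
  then have "ys = replicate (length ys) a" "ms = replicate (length ms) b" "es = replicate (length es) a"
    using bool_list_eq_replicate[of a] bool_list_eq_replicate[of b ms] ys(2) zs(2)
    unfolding b_def by simp_all
  then obtain x y z where rep: "ys = replicate x a" "ms = replicate y b" "es = replicate z a"
    by blast
  then have "w = replicate x a @ replicate (Suc (Suc y)) b @ replicate z a"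
    using w by (simp add: replicate_append_same)
  moreover have "0 < x" "0 < z"
    using A E ik rep by (auto simp: count_list_replicate)
  ultimately show thesis
    using that by (metis gr0_conv_Suc)
qed

section \<open>Optimal words\<close>

lemma optimal_occ_ge:
  assumes "optimal p w" "length w' = length w"
  shows "occ p w' \<le> occ p w"
proof -
  have "finite {v :: bool list. length v = length w}"
    using finite_lists_length_eq[of "UNIV :: bool set"] by simp
  then have "occ p w' \<le> maxocc (length w) p"
    unfolding maxocc_def using assms(2) by (intro Max_ge) auto
  then show ?thesis
    using assms(1) unfolding optimal_def by simp
qed

lemma optimal_occ_pos:
  assumes "optimal p w" "length p \<le> length w"
  shows "0 < occ p w"
proof -
  define v where "v = p @ replicate (length w - length p) True"
  have "subseq_count p p * subseq_count [] (replicate (length w - length p) True)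
      \<le> subseq_count (p @ []) v"
    unfolding v_def by (rule subseq_count_append_supermult)
  then have "0 < occ p v"
    using subseq_count_self_pos[of p] by (simp add: occ_eq_subseq_count)
  also have "occ p v \<le> occ p w"
    using assms by (intro optimal_occ_ge) (simp_all add: v_def)
  finally show ?thesis .
qed

lemma optimal_blocks_count:
  fixes w :: "bool list" and a :: bool and i j k :: nat
  defines "p \<equiv> replicate i a @ replicate (Suc (Suc j)) (\<not> a) @ replicate k a"
  assumes "optimal p w"
  shows "subseq_count p w
           = (count_list w (\<not> a) choose Suc (Suc j)) * binomial_product_max i k (count_list w a)"
proof (rule antisym)
  show "subseq_count p w
      \<le> (count_list w (\<not> a) choose Suc (Suc j)) * binomial_product_max i k (count_list w a)"
    unfolding p_def by (rule subseq_count_blocks_le)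
next
  define m where "m = count_list w a"
  define r where "r = count_list w (\<not> a)"
  obtain t where t: "t \<le> m" "(t choose i) * ((m - t) choose k) = binomial_product_max i k m"
    using binomial_product_max_attained .
  define v where "v = replicate t a @ replicate r (\<not> a) @ replicate (m - t) a"
  have "(r choose Suc (Suc j)) * binomial_product_max i k m
      = (t choose i) * (r choose Suc (Suc j)) * ((m - t) choose k)"
    using t(2) by simp
  also have "\<dots> \<le> subseq_count p v"
    unfolding p_def v_def by (rule subseq_count_blocks_ge) simp
  also have "\<dots> \<le> subseq_count p w"
    using optimal_occ_ge[OF assms(2), of v] count_list_bool[of w a] t(1)
    by (simp add: v_def m_def r_def occ_eq_subseq_count)
  finally show "(count_list w (\<not> a) choose Suc (Suc j)) * binomial_product_max i k (count_list w a)
      \<le> subseq_count p w"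
    unfolding m_def r_def .
qed

theorem mainTheorem10:
  fixes p :: "bool list" and n :: nat and w :: "bool list"
  assumes "length (runs p) = 3"
    and "length (runs p ! 1) \<ge> 2"
    and "n \<ge> length p"
    and "length w = n"
    and "optimal p w"
  shows "length (runs w) = 3"
proof -
  obtain r0 r1 r2 where runs_p: "runs p = [r0, r1, r2]"
    using assms(1) by (auto simp: length_Suc_conv numeral_3_eq_3)
  then obtain a
    where p: "p = replicate (length r0) a @ replicate (length r1) (\<not> a) @ replicate (length r2) a"
    and "r0 \<noteq> []" "r2 \<noteq> []"
    by (rule three_runs_blocks)
  obtain j where j: "length r1 = Suc (Suc j)"
    using assms(2) runs_p by (metis le_Suc_ex add_2_eq_Suc nth_Cons_Suc nth_Cons_0 One_nat_def)
  have count: "subseq_count p w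
      = (count_list w (\<not> a) choose Suc (Suc j))
        * binomial_product_max (length r0) (length r2) (count_list w a)"
    using optimal_blocks_count assms(5) unfolding p j by blast
  have "0 < subseq_count p w"
    using optimal_occ_pos assms(3-5) by (simp add: occ_eq_subseq_count)
  then obtain x y z where "w = replicate (Suc x) a @ replicate (Suc y) (\<not> a) @ replicate (Suc z) a"
    using extremal_blocks_word[of "length r0" "length r2" a j w] count
      \<open>r0 \<noteq> []\<close> \<open>r2 \<noteq> []\<close>
    unfolding p j by auto
  then show ?thesis
    by (simp add: runs_three_blocks del: replicate_Suc)
qed

end
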